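(* Let $k\ge 3$ be an odd integer. Let $V\subset\mathbb{P}^2$ be the zero-dimensional scheme consisting of: (i) $\frac12k(k-1)-2$ general subschemes of length $2$ (each supported at a general point with a general tangent direction); (ii) a sub-star $P\!\left(k+1,\frac12(k+1)\right)$ (formed from a star configuration of $k+1$ general lines); (iii) $\frac12(k^2+4k+9)$ general points. Then there is no nonzero form of degree $2k-1$ on $\mathbb{P}^2$ vanishing on $V$.
   Context: A star configuration of $a$ lines in $\mathbb{P}^2$ is the union of $a$ general lines (no three concurrent); its singular points are the $\binom{a}{2}$ pairwise intersection points. A sub-star $P(a,b)$ is the set of singular points of a star configuration of $a$ lines with $b$ of these points omitted in such a way that every configuration line contains at most one omitted point; it consists of $\binom{a}{2}-b$ points. "General" means lying in a suitable dense Zariski-open subset of the relevant parameter space, and the various parts of $V$ are general with respect to each other. *)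

theory Defs
  imports Complex_Main
begin

text \<open>Points of C^3 (homogeneous coordinates of P^2) are functions nat => complex,
  only coordinates 0,1,2 are used. A ternary form of degree d is a coefficient
  function on exponent triples (a,b,c) with a+b+c = d.\<close>

definition monoms :: "nat \<Rightarrow> (nat \<times> nat \<times> nat) set" where
  "monoms d = {(a,b,c). a + b + c = d}"

definition form_eval :: "nat \<Rightarrow> (nat \<times> nat \<times> nat \<Rightarrow> complex) \<Rightarrow> (nat \<Rightarrow> complex) \<Rightarrow> complex" where
  "form_eval d F x = (\<Sum>(a,b,c)\<in>monoms d. F (a,b,c) * x 0 ^ a * x 1 ^ b * x 2 ^ c)"

definition form_deriv :: "nat \<Rightarrow> (nat \<times> nat \<times> nat \<Rightarrow> complex) \<Rightarrow> (nat \<Rightarrow> complex) \<Rightarrow> (nat \<Rightarrow> complex) \<Rightarrow> complex" where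
  "form_deriv d F x v = (\<Sum>(a,b,c)\<in>monoms d. F (a,b,c) *
      (of_nat a * x 0 ^ (a - 1) * x 1 ^ b * x 2 ^ c * v 0
     + of_nat b * x 0 ^ a * x 1 ^ (b - 1) * x 2 ^ c * v 1
     + of_nat c * x 0 ^ a * x 1 ^ b * x 2 ^ (c - 1) * v 2))"

text \<open>Intersection point of the lines with coefficient vectors l and m.\<close>
definition cross :: "(nat \<Rightarrow> complex) \<Rightarrow> (nat \<Rightarrow> complex) \<Rightarrow> (nat \<Rightarrow> complex)" where
  "cross l m = (\<lambda>i. if i = 0 then l 1 * m 2 - l 2 * m 1
                    else if i = 1 then l 2 * m 0 - l 0 * m 2
                    else l 0 * m 1 - l 1 * m 0)"

inductive poly_fun :: "nat \<Rightarrow> ((nat \<Rightarrow> complex) \<Rightarrow> complex) \<Rightarrow> bool" for N where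
  pf_const: "poly_fun N (\<lambda>z. c)"
| pf_var: "i < N \<Longrightarrow> poly_fun N (\<lambda>z. z i)"
| pf_add: "poly_fun N f \<Longrightarrow> poly_fun N g \<Longrightarrow> poly_fun N (\<lambda>z. f z + g z)"
| pf_mult: "poly_fun N f \<Longrightarrow> poly_fun N g \<Longrightarrow> poly_fun N (\<lambda>z. f z * g z)"

text \<open>P holds for a general parameter in C^N: it holds on a nonempty Zariski open set
  (the non-vanishing locus of a polynomial which is not identically zero).\<close>
definition generic :: "nat \<Rightarrow> ((nat \<Rightarrow> complex) \<Rightarrow> bool) \<Rightarrow> bool" where
  "generic N P \<longleftrightarrow> (\<exists>G. poly_fun N G \<and> (\<exists>z. G z \<noteq> 0) \<and> (\<forall>z. G z \<noteq> 0 \<longrightarrow> P z))"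

definition blk :: "nat \<Rightarrow> nat \<Rightarrow> (nat \<Rightarrow> complex) \<Rightarrow> (nat \<Rightarrow> complex)" where
  "blk off i z = (\<lambda>c. z (off + 3 * i + c))"

end

theory Submission
  imports Defs "Jordan_Normal_Form.Determinant"
begin

text \<open>The scheme V imposes exactly as many conditions as there are monomials of degree
  d = 2k - 1, so the conditions form a square linear system whose determinant is a polynomial
  in the parameters; it suffices to find one configuration where it does not vanish.
  Write k = 2r + 1 and index the monomials by the lattice points (j, s) with j + s \<le> d.
  In the special configuration the length-2 schemes lie on the horizontal lines y = j (j < k),
  pointing along them, and the remaining columns are filled with general points; the k + 1 lines
  of the star are tangents to the conic x^2 = yz, column k + a collecting the points on the
  a-th of them, with the r + 1 leftover general points placed on the lines with an omitted
  point. The form attached to the slot (j, s) is the product of the lines of all earlier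
  columns, of the lines through the first s points of column j, and a power of the line at
  infinity. It kills every condition lexicographically before (j, s) but not that of (j, s)
  itself, so the system is triangular with respect to these forms.\<close>

definition lin_form :: "(nat \<Rightarrow> complex) \<Rightarrow> (nat \<Rightarrow> complex) \<Rightarrow> complex" where
  "lin_form l x = l 0 * x 0 + l 1 * x 1 + l 2 * x 2"

fun prod_coeffs :: "(nat \<Rightarrow> complex) list \<Rightarrow> nat \<times> nat \<times> nat \<Rightarrow> complex" where
  "prod_coeffs [] = (\<lambda>(a,b,c). if a = 0 \<and> b = 0 \<and> c = 0 then 1 else 0)"
| "prod_coeffs (l # ls) = (\<lambda>(a,b,c). (if 0 < a then l 0 * prod_coeffs ls (a-1,b,c) else 0)
      + (if 0 < b then l 1 * prod_coeffs ls (a,b-1,c) else 0)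
      + (if 0 < c then l 2 * prod_coeffs ls (a,b,c-1) else 0))"

lemma finite_monoms: "finite (monoms d)"
proof -
  have "monoms d \<subseteq> {0..d} \<times> {0..d} \<times> {0..d}" unfolding monoms_def by auto
  thus ?thesis by (rule finite_subset) auto
qed

lemma sum_monoms_Suc_x: "(\<Sum>t\<in>monoms (Suc e). (if 0 < fst t then h t else 0)) = (\<Sum>t\<in>monoms e. h (Suc (fst t), snd t))"
proof -
  have "(\<Sum>t\<in>monoms (Suc e). (if 0 < fst t then h t else 0)) = (\<Sum>t\<in>{t\<in>monoms (Suc e). 0 < fst t}. h t)"
    by (simp add: sum.inter_filter[symmetric] finite_monoms)
  also have "{t\<in>monoms (Suc e). 0 < fst t} = (\<lambda>t. (Suc (fst t), snd t)) ` monoms e"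
    unfolding monoms_def by (auto simp: image_iff) presburger
  also have "(\<Sum>t\<in>\<dots>. h t) = (\<Sum>t\<in>monoms e. h (Suc (fst t), snd t))"
    by (subst sum.reindex) (auto simp: inj_on_def)
  finally show ?thesis .
qed

lemma sum_monoms_Suc_y: "(\<Sum>t\<in>monoms (Suc e). (if 0 < fst (snd t) then h t else 0)) = (\<Sum>t\<in>monoms e. h (fst t, Suc (fst (snd t)), snd (snd t)))"
proof -
  have "(\<Sum>t\<in>monoms (Suc e). (if 0 < fst (snd t) then h t else 0)) = (\<Sum>t\<in>{t\<in>monoms (Suc e). 0 < fst (snd t)}. h t)"
    by (simp add: sum.inter_filter[symmetric] finite_monoms)
  also have "{t\<in>monoms (Suc e). 0 < fst (snd t)} = (\<lambda>t. (fst t, Suc (fst (snd t)), snd (snd t))) ` monoms e"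
    unfolding monoms_def by (auto simp: image_iff) presburger
  also have "(\<Sum>t\<in>\<dots>. h t) = (\<Sum>t\<in>monoms e. h (fst t, Suc (fst (snd t)), snd (snd t)))"
    by (subst sum.reindex) (auto simp: inj_on_def)
  finally show ?thesis .
qed

lemma sum_monoms_Suc_z: "(\<Sum>t\<in>monoms (Suc e). (if 0 < snd (snd t) then h t else 0)) = (\<Sum>t\<in>monoms e. h (fst t, fst (snd t), Suc (snd (snd t))))"
proof -
  have "(\<Sum>t\<in>monoms (Suc e). (if 0 < snd (snd t) then h t else 0)) = (\<Sum>t\<in>{t\<in>monoms (Suc e). 0 < snd (snd t)}. h t)"
    by (simp add: sum.inter_filter[symmetric] finite_monoms)
  also have "{t\<in>monoms (Suc e). 0 < snd (snd t)} = (\<lambda>t. (fst t, fst (snd t), Suc (snd (snd t)))) ` monoms e"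
    unfolding monoms_def by (auto simp: image_iff) presburger
  also have "(\<Sum>t\<in>\<dots>. h t) = (\<Sum>t\<in>monoms e. h (fst t, fst (snd t), Suc (snd (snd t))))"
    by (subst sum.reindex) (auto simp: inj_on_def)
  finally show ?thesis .
qed

lemma form_eval_prod_coeffs: "form_eval (length ls) (prod_coeffs ls) x = (\<Prod>l\<leftarrow>ls. lin_form l x)"
proof (induction ls)
  case Nil
  have "monoms 0 = {(0,0,0)}" unfolding monoms_def by auto
  then show ?case by (simp add: form_eval_def)
next
  case (Cons l ls)
  let ?G = "prod_coeffs ls" and ?e = "length ls"
  let ?mo = "\<lambda>t::nat\<times>nat\<times>nat. x 0 ^ fst t * x 1 ^ fst (snd t) * x 2 ^ snd (snd t)"
  have fe: "form_eval e F x = (\<Sum>t\<in>monoms e. F t * ?mo t)" for e F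
    unfolding form_eval_def by (rule sum.cong) (auto simp: mult.assoc)
  have "form_eval (length (l#ls)) (prod_coeffs (l#ls)) x =
      (\<Sum>t\<in>monoms (Suc ?e). (if 0 < fst t then l 0 * ?G (fst t - 1, snd t) * ?mo t else 0))
    + (\<Sum>t\<in>monoms (Suc ?e). (if 0 < fst (snd t) then l 1 * ?G (fst t, fst (snd t) - 1, snd (snd t)) * ?mo t else 0))
    + (\<Sum>t\<in>monoms (Suc ?e). (if 0 < snd (snd t) then l 2 * ?G (fst t, fst (snd t), snd (snd t) - 1) * ?mo t else 0))"
    unfolding fe by (simp add: sum.distrib[symmetric] split_def distrib_right del: prod_coeffs.simps(2)) (rule sum.cong, auto simp: split_def ring_distribs)
  also have "\<dots> = l 0 * x 0 * form_eval ?e ?G x + l 1 * x 1 * form_eval ?e ?G x + l 2 * x 2 * form_eval ?e ?G x"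
    unfolding sum_monoms_Suc_x sum_monoms_Suc_y sum_monoms_Suc_z fe by (simp add: sum_distrib_left algebra_simps)
  also have "\<dots> = (\<Prod>l\<leftarrow>l#ls. lin_form l x)" using Cons by (simp add: lin_form_def algebra_simps)
  finally show ?case .
qed

lemma form_deriv_has_derivative:
  "((\<lambda>t. form_eval d F (\<lambda>i. x i + t * v i)) has_field_derivative form_deriv d F x v) (at 0)"
proof -
  have "((\<lambda>t. \<Sum>(a,b,c)\<in>monoms d. F (a,b,c) * (x 0 + t * v 0) ^ a * (x 1 + t * v 1) ^ b * (x 2 + t * v 2) ^ c)
     has_field_derivative (\<Sum>(a,b,c)\<in>monoms d. F (a,b,c) *
      (of_nat a * x 0 ^ (a - 1) * x 1 ^ b * x 2 ^ c * v 0
     + of_nat b * x 0 ^ a * x 1 ^ (b - 1) * x 2 ^ c * v 1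
     + of_nat c * x 0 ^ a * x 1 ^ b * x 2 ^ (c - 1) * v 2))) (at 0)"
    unfolding split_def
    apply (rule DERIV_sum)
    apply (rule derivative_eq_intros refl | simp)+
    apply (simp add: algebra_simps)
    done
  then show ?thesis unfolding form_eval_def form_deriv_def by simp
qed

fun prod_deriv :: "(nat \<Rightarrow> complex) list \<Rightarrow> (nat \<Rightarrow> complex) \<Rightarrow> (nat \<Rightarrow> complex) \<Rightarrow> complex" where
  "prod_deriv [] x v = 0"
| "prod_deriv (l # ls) x v = lin_form l v * (\<Prod>l'\<leftarrow>ls. lin_form l' x) + lin_form l x * prod_deriv ls x v"

lemma lin_form_along_line: "lin_form l (\<lambda>i. x i + t * v i) = lin_form l x + t * lin_form l v"
  unfolding lin_form_def by (simp add: algebra_simps)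

lemma prod_lin_form_has_derivative: "((\<lambda>t. \<Prod>l\<leftarrow>ls. lin_form l (\<lambda>i. x i + t * v i)) has_field_derivative prod_deriv ls x v) (at 0)"
proof (induction ls)
  case Nil
  then show ?case by simp
next
  case (Cons l ls)
  have d1: "((\<lambda>t. lin_form l x + t * lin_form l v) has_field_derivative lin_form l v) (at 0)"
    by (auto intro!: derivative_eq_intros)
  have "((\<lambda>t. (lin_form l x + t * lin_form l v) * (\<Prod>l\<leftarrow>ls. lin_form l (\<lambda>i. x i + t * v i))) has_field_derivative
     lin_form l v * (\<Prod>l\<leftarrow>ls. lin_form l (\<lambda>i. x i + 0 * v i)) + prod_deriv ls x v * (lin_form l x + 0 * lin_form l v)) (at 0)"
    by (rule DERIV_mult[OF d1 Cons])
  moreover have "((\<lambda>i. x i + 0 * v i)) = x" by simp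
  ultimately show ?case by (simp add: lin_form_along_line algebra_simps)
qed

lemma form_deriv_prod_coeffs: "form_deriv (length ls) (prod_coeffs ls) x v = prod_deriv ls x v"
proof -
  have "((\<lambda>t. form_eval (length ls) (prod_coeffs ls) (\<lambda>i. x i + t * v i)) has_field_derivative prod_deriv ls x v) (at 0)"
    unfolding form_eval_prod_coeffs by (rule prod_lin_form_has_derivative)
  then show ?thesis using form_deriv_has_derivative DERIV_unique by blast
qed

lemma prod_deriv_eq_0_tangent_factor: "l \<in> set ls \<Longrightarrow> lin_form l x = 0 \<Longrightarrow> lin_form l v = 0 \<Longrightarrow> prod_deriv ls x v = 0"
proof (induction ls)
  case Nil then show ?case by simp
next
  case (Cons a ls)
  then show ?case by (cases "a = l") (auto simp: prod_list_zero_iff)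
qed

lemma prod_lin_form_eq_0: "l \<in> set ls \<Longrightarrow> lin_form l x = 0 \<Longrightarrow> (\<Prod>l'\<leftarrow>ls. lin_form l' x) = 0"
  by (induction ls) auto

lemma prod_deriv_eq_0_double_zero: "2 \<le> length (filter (\<lambda>l. lin_form l x = 0) ls) \<Longrightarrow> prod_deriv ls x v = 0"
proof (induction ls)
  case Nil then show ?case by simp
next
  case (Cons a ls)
  show ?case
  proof (cases "lin_form a x = 0")
    case True
    then have "1 \<le> length (filter (\<lambda>l. lin_form l x = 0) ls)" using Cons.prems by simp
    then obtain l where "l \<in> set ls" "lin_form l x = 0"
      by (metis (mono_tags, lifting) filter_False le_zero_eq length_0_conv one_neq_zero)
    then show ?thesis using True prod_lin_form_eq_0 by simp
  next
    case False
    then have "1 \<le> length (filter (\<lambda>l. lin_form l x = 0) ls)" using Cons.prems by simp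
    then obtain l where "l \<in> set ls" "lin_form l x = 0"
      by (metis (mono_tags, lifting) filter_False le_zero_eq length_0_conv one_neq_zero)
    then show ?thesis using False Cons prod_lin_form_eq_0 by simp
  qed
qed
lemma prod_deriv_simple_zero: "(\<forall>l\<in>set as \<union> set bs. lin_form l x \<noteq> 0) \<Longrightarrow> lin_form g x = 0 \<Longrightarrow>
   prod_deriv (as @ g # bs) x v = lin_form g v * (\<Prod>l\<leftarrow>as @ bs. lin_form l x)"
proof (induction as)
  case Nil then show ?case by simp
next
  case (Cons a as)
  then show ?case by (simp add: algebra_simps)
qed

lemma sum_nth_distinct: "distinct xs \<Longrightarrow> (\<Sum>c<length xs. f (xs!c)) = (\<Sum>t\<in>set xs. f t)"
  by (simp add: sum_list_distinct_conv_sum_set[symmetric] sum_list_sum_nth atLeast0LessThan)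

lemma det_ne_0_imp_solution_zero:
  fixes w :: "nat \<Rightarrow> 'b \<Rightarrow> complex"
  assumes ms: "distinct ms" "set ms = S" "length ms = D"
  and det: "det (mat D D (\<lambda>(r,c). w r (ms!c))) \<noteq> 0"
  and rows: "\<forall>r<D. (\<Sum>t\<in>S. F t * w r t) = 0"
  shows "\<forall>t\<in>S. F t = 0"
proof -
  let ?A = "mat D D (\<lambda>(r,c). w r (ms!c))"
  let ?v = "vec D (\<lambda>c. F (ms!c))"
  have A: "?A \<in> carrier_mat D D" by simp
  have "?A *\<^sub>v ?v = 0\<^sub>v D"
  proof (rule eq_vecI)
    fix r assume r: "r < dim_vec (0\<^sub>v D :: complex vec)"
    have "(?A *\<^sub>v ?v) $ r = (\<Sum>c<D. w r (ms!c) * F (ms!c))"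
      using r by (simp add: scalar_prod_def atLeast0LessThan)
    also have "\<dots> = (\<Sum>t\<in>S. F t * w r t)"
      using sum_nth_distinct[OF ms(1), of "\<lambda>t. F t * w r t"] ms by (simp add: mult.commute)
    also have "\<dots> = 0" using rows r by simp
    finally show "(?A *\<^sub>v ?v) $ r = (0\<^sub>v D) $ r" using r by simp
  qed simp
  moreover have "?v \<in> carrier_vec D" by simp
  ultimately have "?v = 0\<^sub>v D" using det det_0_iff_vec_prod_zero[OF A] by blast
  then have "\<forall>c<D. F (ms!c) = 0" by (metis index_vec index_zero_vec(1))
  then show ?thesis using ms by (metis in_set_conv_nth)
qed

lemma det_ne_0_if_dual_triangular:
  fixes w :: "nat \<Rightarrow> 'b \<Rightarrow> complex"
  assumes ms: "distinct ms" "set ms = S" "length ms = D"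
  and tri: "\<And>r r'. r < r' \<Longrightarrow> r' < D \<Longrightarrow> (\<Sum>t\<in>S. phi r' t * w r t) = 0"
  and diag: "\<And>r. r < D \<Longrightarrow> (\<Sum>t\<in>S. phi r t * w r t) \<noteq> 0"
  shows "det (mat D D (\<lambda>(r,c). w r (ms!c))) \<noteq> 0"
proof -
  let ?A = "mat D D (\<lambda>(r,c). w r (ms!c))"
  let ?B = "mat D D (\<lambda>(c,r). phi r (ms!c))"
  have A: "?A \<in> carrier_mat D D" and B: "?B \<in> carrier_mat D D" by auto
  have AB: "(?A * ?B) $$ (r,r') = (\<Sum>t\<in>S. phi r' t * w r t)" if "r < D" "r' < D" for r r'
  proof -
    have "(?A * ?B) $$ (r,r') = (\<Sum>c<D. w r (ms!c) * phi r' (ms!c))"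
      using that by (simp add: scalar_prod_def atLeast0LessThan)
    also have "\<dots> = (\<Sum>t\<in>S. phi r' t * w r t)"
      using sum_nth_distinct[OF ms(1), of "\<lambda>t. phi r' t * w r t"] ms by (simp add: mult.commute)
    finally show ?thesis .
  qed
  have C: "?A * ?B \<in> carrier_mat D D" using A B by auto
  have "det (?A * ?B) = prod_list (diag_mat (?A * ?B))"
    by (rule det_lower_triangular[OF _ C], subst AB, auto intro: tri)
  also have "\<dots> \<noteq> 0"
    unfolding diag_mat_def prod_list_zero_iff using AB diag by auto
  finally have "det ?A * det ?B \<noteq> 0" using det_mult[OF A B] by simp
  then show ?thesis by auto
qed

lemma poly_fun_sum: "finite A \<Longrightarrow> (\<And>a. a \<in> A \<Longrightarrow> poly_fun N (f a)) \<Longrightarrow> poly_fun N (\<lambda>z. \<Sum>a\<in>A. f a z)"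
proof (induction A rule: finite_induct)
  case empty then show ?case by (simp add: pf_const)
next
  case (insert x F) then show ?case by (simp add: pf_add)
qed

lemma poly_fun_prod: "finite A \<Longrightarrow> (\<And>a. a \<in> A \<Longrightarrow> poly_fun N (f a)) \<Longrightarrow> poly_fun N (\<lambda>z. \<Prod>a\<in>A. f a z)"
proof (induction A rule: finite_induct)
  case empty then show ?case by (simp add: pf_const)
next
  case (insert x F) then show ?case by (simp add: pf_mult)
qed

lemma poly_fun_power: "poly_fun N f \<Longrightarrow> poly_fun N (\<lambda>z. f z ^ n)"
  by (induction n) (auto intro: pf_const pf_mult)

lemma poly_fun_diff: "poly_fun N f \<Longrightarrow> poly_fun N g \<Longrightarrow> poly_fun N (\<lambda>z. f z - g z)"
proof -
  assume f: "poly_fun N f" and g: "poly_fun N g"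
  have "poly_fun N (\<lambda>z. f z + (-1) * g z)" by (intro pf_add f pf_mult pf_const g)
  then show ?thesis by simp
qed

lemma poly_fun_det: "(\<And>i j. i < D \<Longrightarrow> j < D \<Longrightarrow> poly_fun N (\<lambda>z. e z i j)) \<Longrightarrow>
   poly_fun N (\<lambda>z. det (mat D D (\<lambda>(i,j). e z i j)))"
proof -
  assume e: "\<And>i j. i < D \<Longrightarrow> j < D \<Longrightarrow> poly_fun N (\<lambda>z. e z i j)"
  have "poly_fun N (\<lambda>z. \<Sum>p\<in>{p. p permutes {0..<D}}. signof p * (\<Prod>i=0..<D. e z i (p i)))"
    apply (rule poly_fun_sum)
     apply (simp add: finite_permutations)
    apply (rule pf_mult[OF pf_const])
    apply (rule poly_fun_prod, simp)
    apply (rule e, simp)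
    apply (simp add: permutes_def)
    done
  then show ?thesis
    by (rule back_subst[of "poly_fun N"]) (rule ext, subst det_def'[of _ D], auto intro!: sum.cong prod.cong)
qed

lemma generic_mono: "generic N P \<Longrightarrow> (\<And>z. P z \<Longrightarrow> Q z) \<Longrightarrow> generic N Q"
  unfolding generic_def by blast

lemma generic_trivial_solution:
  fixes w :: "(nat \<Rightarrow> complex) \<Rightarrow> nat \<Rightarrow> 'b \<Rightarrow> complex"
  assumes ms: "distinct ms" "set ms = S" "length ms = D"
    and poly: "\<And>i t. i < D \<Longrightarrow> poly_fun N (\<lambda>z. w z i t)"
    and det: "det (mat D D (\<lambda>(i,c). w z0 i (ms!c))) \<noteq> 0"
  shows "generic N (\<lambda>z. \<forall>F. (\<forall>i<D. (\<Sum>t\<in>S. F t * w z i t) = 0) \<longrightarrow> (\<forall>t\<in>S. F t = 0))"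
  unfolding generic_def
proof (rule exI[of _ "\<lambda>z. det (mat D D (\<lambda>(i,c). w z i (ms!c)))"], intro conjI allI impI)
  show "poly_fun N (\<lambda>z. det (mat D D (\<lambda>(i,c). w z i (ms!c))))"
    by (rule poly_fun_det[where e = "\<lambda>z i c. w z i (ms!c)"]) (simp add: poly)
  show "\<exists>z. det (mat D D (\<lambda>(i,c). w z i (ms!c))) \<noteq> 0" using det by blast
  show "\<forall>t\<in>S. F t = 0" if "det (mat D D (\<lambda>(i,c). w z i (ms!c))) \<noteq> 0"
      and "\<forall>i<D. (\<Sum>t\<in>S. F t * w z i t) = 0" for z F
    using det_ne_0_imp_solution_zero[OF ms that] .
qed

definition kpar :: "nat \<Rightarrow> nat" where "kpar r = 2*r+1"
definition mpar :: "nat \<Rightarrow> nat" where "mpar r = r*(2*r+1) - 2"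
definition npar :: "nat \<Rightarrow> nat" where "npar r = 2*r^2+6*r+7"
definition dpar :: "nat \<Rightarrow> nat" where "dpar r = 4*r+1"

datatype cond = TanPt nat | TanDir nat | StarPt nat nat | GenPt nat

definition monom_at :: "nat \<times> nat \<times> nat \<Rightarrow> (nat \<Rightarrow> complex) \<Rightarrow> complex" where
  "monom_at t x = (case t of (a,b,c) \<Rightarrow> x 0 ^ a * x 1 ^ b * x 2 ^ c)"

definition monom_deriv :: "nat \<times> nat \<times> nat \<Rightarrow> (nat \<Rightarrow> complex) \<Rightarrow> (nat \<Rightarrow> complex) \<Rightarrow> complex" where
  "monom_deriv t x v = (case t of (a,b,c) \<Rightarrow>
      of_nat a * x 0 ^ (a - 1) * x 1 ^ b * x 2 ^ c * v 0
     + of_nat b * x 0 ^ a * x 1 ^ (b - 1) * x 2 ^ c * v 1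
     + of_nat c * x 0 ^ a * x 1 ^ b * x 2 ^ (c - 1) * v 2)"

lemma form_eval_eq_sum_monom_at: "form_eval d F x = (\<Sum>t\<in>monoms d. F t * monom_at t x)"
  unfolding form_eval_def monom_at_def by (rule sum.cong) (auto simp: mult.assoc)

lemma form_deriv_eq_sum_monom_deriv: "form_deriv d F x v = (\<Sum>t\<in>monoms d. F t * monom_deriv t x v)"
  unfolding form_deriv_def monom_deriv_def by (rule sum.cong) auto

fun cond_point :: "nat \<Rightarrow> (nat \<Rightarrow> complex) \<Rightarrow> cond \<Rightarrow> (nat \<Rightarrow> complex)" where
  "cond_point r z (TanPt i) = blk 0 i z"
| "cond_point r z (TanDir i) = blk 0 i z"
| "cond_point r z (StarPt a b) = cross (blk (6 * mpar r) a z) (blk (6 * mpar r) b z)"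
| "cond_point r z (GenPt i) = blk (6 * mpar r + 3 * (kpar r + 1)) i z"

fun cond_coeff :: "nat \<Rightarrow> (nat \<Rightarrow> complex) \<Rightarrow> cond \<Rightarrow> nat \<times> nat \<times> nat \<Rightarrow> complex" where
  "cond_coeff r z (TanDir i) t = monom_deriv t (blk 0 i z) (blk (3 * mpar r) i z)"
| "cond_coeff r z c t = monom_at t (cond_point r z c)"

fun cond_valid :: "nat \<Rightarrow> cond \<Rightarrow> bool" where
  "cond_valid r (TanPt i) = (i < mpar r)"
| "cond_valid r (TanDir i) = (i < mpar r)"
| "cond_valid r (StarPt a b) = (a < b \<and> b < kpar r + 1 \<and> \<not> (even a \<and> b = a + 1))"
| "cond_valid r (GenPt i) = (i < npar r)"

definition cond_value :: "nat \<Rightarrow> (nat \<Rightarrow> complex) \<Rightarrow> cond \<Rightarrow> (nat \<times> nat \<times> nat \<Rightarrow> complex) \<Rightarrow> complex" where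
  "cond_value r z c F = (\<Sum>t\<in>monoms (dpar r). F t * cond_coeff r z c t)"

lemma cond_value_TanDir: "cond_value r z (TanDir i) F = form_deriv (dpar r) F (blk 0 i z) (blk (3 * mpar r) i z)"
  unfolding cond_value_def form_deriv_eq_sum_monom_deriv by simp

lemma cond_value_eval: "\<forall>i. c \<noteq> TanDir i \<Longrightarrow> cond_value r z c F = form_eval (dpar r) F (cond_point r z c)"
  unfolding cond_value_def form_eval_eq_sum_monom_at by (cases c) auto

definition vanishes_on_V :: "nat \<Rightarrow> (nat \<Rightarrow> complex) \<Rightarrow> (nat \<times> nat \<times> nat \<Rightarrow> complex) \<Rightarrow> bool" where
  "vanishes_on_V r z F \<longleftrightarrow> ((\<forall>i<mpar r. form_eval (dpar r) F (blk 0 i z) = 0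
                     \<and> form_deriv (dpar r) F (blk 0 i z) (blk (3 * mpar r) i z) = 0)
             \<and> (\<forall>i j. i < j \<and> j < kpar r + 1 \<and> \<not> (even i \<and> j = i + 1) \<longrightarrow>
                     form_eval (dpar r) F (cross (blk (6 * mpar r) i z) (blk (6 * mpar r) j z)) = 0)
             \<and> (\<forall>i<npar r. form_eval (dpar r) F (blk (6 * mpar r + 3 * (kpar r + 1)) i z) = 0))"

lemma cond_value_eq_0: "vanishes_on_V r z F \<Longrightarrow> cond_valid r c \<Longrightarrow> cond_value r z c F = 0"
  by (cases c) (auto simp: vanishes_on_V_def cond_value_TanDir cond_value_eval)

definition Npar :: "nat \<Rightarrow> nat" where "Npar r = 6 * mpar r + 3 * (kpar r + 1) + 3 * npar r"

lemma poly_fun_blk: "off + 3 * i + 3 \<le> N \<Longrightarrow> c < 3 \<Longrightarrow> poly_fun N (\<lambda>z. blk off i z c)"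
  unfolding blk_def by (rule pf_var) simp

lemma poly_fun_monom_at: "(\<And>c. c < 3 \<Longrightarrow> poly_fun N (\<lambda>z. X z c)) \<Longrightarrow> poly_fun N (\<lambda>z. monom_at t (X z))"
  unfolding monom_at_def by (cases t) (auto intro!: pf_mult poly_fun_power)

lemma poly_fun_monom_deriv: "(\<And>c. c < 3 \<Longrightarrow> poly_fun N (\<lambda>z. X z c)) \<Longrightarrow> (\<And>c. c < 3 \<Longrightarrow> poly_fun N (\<lambda>z. Y z c))
   \<Longrightarrow> poly_fun N (\<lambda>z. monom_deriv t (X z) (Y z))"
  unfolding monom_deriv_def by (cases t) (auto intro!: pf_mult poly_fun_power pf_add pf_const)

lemma poly_fun_cross: "(\<And>c. c < 3 \<Longrightarrow> poly_fun N (\<lambda>z. X z c)) \<Longrightarrow> (\<And>c. c < 3 \<Longrightarrow> poly_fun N (\<lambda>z. Y z c))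
   \<Longrightarrow> c < 3 \<Longrightarrow> poly_fun N (\<lambda>z. cross (X z) (Y z) c)"
proof -
  assume X: "\<And>c. c < 3 \<Longrightarrow> poly_fun N (\<lambda>z. X z c)" and Y: "\<And>c. c < 3 \<Longrightarrow> poly_fun N (\<lambda>z. Y z c)" and c: "c < 3"
  then consider "c = 0" | "c = 1" | "c = 2" by linarith
  then show ?thesis unfolding cross_def
    by cases (simp_all, (intro pf_mult poly_fun_diff X Y; simp)+)
qed

lemma poly_fun_cond_coeff: "cond_valid r c \<Longrightarrow> poly_fun (Npar r) (\<lambda>z. cond_coeff r z c t)"
proof (cases c)
  case (TanPt i)
  assume "cond_valid r c"
  then show ?thesis using TanPt by (auto intro!: poly_fun_monom_at poly_fun_blk simp: Npar_def)
next
  case (TanDir i)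
  assume "cond_valid r c"
  then show ?thesis using TanDir by (auto intro!: poly_fun_monom_deriv poly_fun_blk simp: Npar_def)
next
  case (StarPt a b)
  assume "cond_valid r c"
  then show ?thesis using StarPt by (auto intro!: poly_fun_monom_at poly_fun_cross poly_fun_blk simp: Npar_def)
next
  case (GenPt i)
  assume "cond_valid r c"
  then show ?thesis using GenPt by (auto intro!: poly_fun_monom_at poly_fun_blk simp: Npar_def)
qed

definition lex_less :: "nat \<times> nat \<Rightarrow> nat \<times> nat \<Rightarrow> bool" where
  "lex_less p q \<longleftrightarrow> fst p < fst q \<or> (fst p = fst q \<and> snd p < snd q)"

definition tri_grid :: "nat \<Rightarrow> (nat \<times> nat) list" where
  "tri_grid e = [(j,s). j \<leftarrow> [0..<e], s \<leftarrow> [0..<e - j]]"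

lemma set_tri_grid: "set (tri_grid e) = {(j,s). j < e \<and> s < e - j}"
  unfolding tri_grid_def by auto

lemma sorted_tri_grid: "sorted_wrt lex_less (tri_grid e)"
proof -
  have "sorted_wrt lex_less [(j,s). j \<leftarrow> [0..<n], s \<leftarrow> [0..<e - j]]" for n
  proof (induction n)
    case 0 then show ?case by simp
  next
    case (Suc n)
    have "sorted_wrt lex_less (map (\<lambda>s. (n,s)) [0..<e - n])"
      by (auto simp: sorted_wrt_map lex_less_def intro: sorted_wrt_mono_rel[OF _ sorted_wrt_upt])
    then show ?case using Suc by (simp add: sorted_wrt_append) (auto simp: lex_less_def)
  qed
  then show ?thesis unfolding tri_grid_def .
qed

lemma tri_grid_nth_lex_less: "i < j \<Longrightarrow> j < length (tri_grid e) \<Longrightarrow> lex_less (tri_grid e ! i) (tri_grid e ! j)"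
  using sorted_tri_grid sorted_wrt_nth_less by blast

lemma distinct_tri_grid: "distinct (tri_grid e)"
  unfolding distinct_conv_nth
proof (intro allI impI)
  fix i j assume "i < length (tri_grid e)" "j < length (tri_grid e)" "i \<noteq> j"
  then consider "i < j" | "j < i" by linarith
  then show "tri_grid e ! i \<noteq> tri_grid e ! j"
    by cases (use \<open>i < length (tri_grid e)\<close> \<open>j < length (tri_grid e)\<close> tri_grid_nth_lex_less[of i j e] tri_grid_nth_lex_less[of j i e] in \<open>auto simp: lex_less_def\<close>)
qed

definition monom_list :: "nat \<Rightarrow> (nat \<times> nat \<times> nat) list" where
  "monom_list d = map (\<lambda>(a,b). (a, b, d - a - b)) (tri_grid (Suc d))"

lemma monom_list_enumerates: "distinct (monom_list d)" "set (monom_list d) = monoms d" "length (monom_list d) = length (tri_grid (Suc d))"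
proof -
  have inj: "inj_on (\<lambda>(a,b). (a, b, d - a - b)) (set (tri_grid (Suc d)))"
    by (auto simp: inj_on_def)
  show "distinct (monom_list d)" unfolding monom_list_def using distinct_tri_grid inj by (simp add: distinct_map)
  show "set (monom_list d) = monoms d"
  proof (rule Set.set_eqI)
    fix t :: "nat \<times> nat \<times> nat"
    obtain a b c where t: "t = (a,b,c)" by (cases t) auto
    show "t \<in> set (monom_list d) \<longleftrightarrow> t \<in> monoms d"
    proof
      assume "t \<in> set (monom_list d)"
      then show "t \<in> monoms d" unfolding monom_list_def monoms_def by (auto simp: set_tri_grid)
    next
      assume "t \<in> monoms d"
      then have "a + b + c = d" using t by (simp add: monoms_def)
      then have "(a,b) \<in> set (tri_grid (Suc d))" "t = (\<lambda>(a,b). (a, b, d - a - b)) (a,b)"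
        unfolding set_tri_grid using t by auto
      then have "t \<in> (\<lambda>(a,b). (a, b, d - a - b)) ` set (tri_grid (Suc d))" by blast
      then show "t \<in> set (monom_list d)" unfolding monom_list_def by simp
    qed
  qed
  show "length (monom_list d) = length (tri_grid (Suc d))" unfolding monom_list_def by simp
qed

lemma tri_grid_nth_bounds: "i < length (tri_grid e) \<Longrightarrow> fst (tri_grid e ! i) < e \<and> snd (tri_grid e ! i) < e - fst (tri_grid e ! i)"
proof -
  assume "i < length (tri_grid e)"
  then have "tri_grid e ! i \<in> set (tri_grid e)" by simp
  then show ?thesis unfolding set_tri_grid by auto
qed

definition tan_count :: "nat \<Rightarrow> nat \<Rightarrow> nat" where "tan_count r j = min r (mpar r - j*r)"
definition gen_count :: "nat \<Rightarrow> nat \<Rightarrow> nat" where "gen_count r j = (2*kpar r - j) - 2*tan_count r j"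
definition gen_before :: "nat \<Rightarrow> nat \<Rightarrow> nat" where "gen_before r j = (\<Sum>i<j. gen_count r i)"
definition gen_column :: "nat \<Rightarrow> nat \<Rightarrow> nat" where "gen_column r u = (LEAST j. u < gen_before r (Suc j))"

lemma gen_before_mono: "i \<le> j \<Longrightarrow> gen_before r i \<le> gen_before r j"
  unfolding gen_before_def by (rule sum_mono2) auto

lemma gen_column_eq: assumes "w < gen_count r j" shows "gen_column r (gen_before r j + w) = j"
  unfolding gen_column_def
proof (rule Least_equality)
  show "gen_before r j + w < gen_before r (Suc j)" using assms by (simp add: gen_before_def)
next
  fix y assume "gen_before r j + w < gen_before r (Suc y)"
  then show "j \<le> y" using gen_before_mono[of "Suc y" j r] by (cases "Suc y \<le> j") auto
qed

lemma sum_min_blocks: "(\<Sum>j<K. min q (m - j*q)) = min (K*q) (m::nat)"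
proof (induction K)
  case 0 then show ?case by simp
next
  case (Suc K)
  then show ?case by (simp add: min_def) (auto simp: algebra_simps)
qed

lemma sum_lessThan_times_2: "(\<Sum>j<K. j) * 2 = K * (K - 1::nat)"
  by (induction K) (auto simp: algebra_simps)

lemma sum_tan_count: "(\<Sum>j<kpar r. tan_count r j) = mpar r"
proof -
  have "mpar r \<le> kpar r * r" unfolding mpar_def kpar_def by (simp add: algebra_simps)
  then show ?thesis unfolding tan_count_def sum_min_blocks by simp
qed

lemma tan_count_le: "tan_count r j \<le> r" unfolding tan_count_def by simp

lemma gen_count_plus_tan_count: "j < kpar r \<Longrightarrow> gen_count r j + 2 * tan_count r j = 2 * kpar r - j"
  unfolding gen_count_def using tan_count_le[of r j] by (simp add: kpar_def)

lemma gen_before_total: assumes r: "r \<ge> 1" shows "gen_before r (kpar r) = npar r - (r + 1)"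
proof -
  have "(\<Sum>j<kpar r. gen_count r j + 2 * tan_count r j) = (\<Sum>j<kpar r. 2 * kpar r - j)"
    by (rule sum.cong) (auto simp: gen_count_plus_tan_count)
  moreover have "(\<Sum>j<kpar r. 2 * kpar r - j) + (\<Sum>j<kpar r. j) = (\<Sum>j<kpar r. 2 * kpar r)"
    by (subst sum.distrib[symmetric]) (rule sum.cong, auto)
  ultimately have "gen_before r (kpar r) + 2 * mpar r + (\<Sum>j<kpar r. j) = 2 * kpar r * kpar r"
    unfolding gen_before_def sum.distrib sum_tan_count[symmetric] by (simp add: sum_distrib_left)
  then have e: "2 * gen_before r (kpar r) + 4 * mpar r + kpar r * (kpar r - 1) = 4 * kpar r * kpar r"
    using sum_lessThan_times_2[of "kpar r"] by linarith
  have rr: "1 \<le> r*r" using mult_le_mono[OF r r] by simp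
  have e0: "r*(2*r+1) = 2*(r*r) + r" by (simp add: algebra_simps)
  have m: "mpar r + 2 = 2*(r*r) + r" unfolding mpar_def e0 using rr by linarith
  have k: "kpar r * (kpar r - 1) = 4*(r*r) + 2*r" unfolding kpar_def by (simp add: algebra_simps)
  have kk: "4 * kpar r * kpar r = 16*(r*r) + 16*r + 4" unfolding kpar_def by (simp add: algebra_simps)
  have n: "npar r = 2*(r*r) + 6*r + 7" unfolding npar_def by (simp add: power2_eq_square)
  show ?thesis using e m k kk n by linarith
qed

definition star_partner :: "nat \<Rightarrow> nat \<Rightarrow> nat" where "star_partner a s = a + (if even a then 2 else 1) + s"

text \<open>Column j < k holds first the tangent schemes
  (point, then derivative), then general points; column k + a holds the intersections of star
  line a with the later lines, skipping its omitted partner, and, if a is even, one general point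
  on line a.\<close>
definition slot_cond :: "nat \<Rightarrow> nat \<times> nat \<Rightarrow> cond" where
 "slot_cond r \<sigma> = (let j = fst \<sigma>; s = snd \<sigma> in
   if j < kpar r then
     (if s < 2*tan_count r j then (if even s then TanPt (j*r + s div 2) else TanDir (j*r + s div 2))
      else GenPt (r + 1 + gen_before r j + (s - 2*tan_count r j)))
   else (if star_partner (j - kpar r) s \<le> kpar r then StarPt (j - kpar r) (star_partner (j - kpar r) s) else GenPt ((j - kpar r) div 2)))"

definition slot :: "nat \<Rightarrow> nat \<times> nat \<Rightarrow> bool" where
  "slot r \<sigma> \<longleftrightarrow> fst \<sigma> < 2*kpar r \<and> snd \<sigma> < 2*kpar r - fst \<sigma>"

lemma tan_index_bounds: assumes "s < 2*tan_count r j" shows "j*r + s div 2 < mpar r" "s div 2 < r"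
proof -
  have "s div 2 < tan_count r j" using assms by linarith
  then show "j*r + s div 2 < mpar r" "s div 2 < r" unfolding tan_count_def by auto
qed

lemma tan_index_div: assumes "s < 2*tan_count r j" shows "(j*r + s div 2) div r = j"
proof -
  have "s div 2 < r" using tan_index_bounds[OF assms] by simp
  then show ?thesis by simp
qed

lemma free_slot_even: assumes "slot r (j,s)" "\<not> j < kpar r" "\<not> star_partner (j - kpar r) s \<le> kpar r"
  shows "even (j - kpar r)" "s = kpar r - (j - kpar r) - 1"
proof -
  have s: "s < kpar r - (j - kpar r)" using assms(1,2) unfolding slot_def by auto
  show "even (j - kpar r)" using assms(3) s unfolding star_partner_def by (auto split: if_splits)
  then show "s = kpar r - (j - kpar r) - 1" using assms(3) s unfolding star_partner_def by auto
qed

lemma cond_valid_slot_cond: assumes r: "r \<ge> 1" and sl: "slot r \<sigma>" shows "cond_valid r (slot_cond r \<sigma>)"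
proof -
  obtain j s where \<sigma>: "\<sigma> = (j,s)" by (cases \<sigma>)
  show ?thesis
  proof (cases "j < kpar r")
    case True
    show ?thesis
    proof (cases "s < 2*tan_count r j")
      case True2: True
      then show ?thesis using True tan_index_bounds[OF True2] unfolding \<sigma> slot_cond_def by auto
    next
      case False
      have s: "s < 2*kpar r - j" using sl \<sigma> unfolding slot_def by auto
      have w: "s - 2*tan_count r j < gen_count r j" using s False gen_count_plus_tan_count[OF True] by linarith
      have "gen_before r j + (s - 2*tan_count r j) < gen_before r (Suc j)" using w by (simp add: gen_before_def)
      also have "\<dots> \<le> gen_before r (kpar r)" using True by (intro gen_before_mono) simp
      also have "\<dots> = npar r - (r+1)" using gen_before_total[OF r] .
      finally have "r + 1 + gen_before r j + (s - 2*tan_count r j) < npar r" unfolding npar_def by simp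
      then show ?thesis using True False unfolding \<sigma> slot_cond_def by simp
    qed
  next
    case False
    have a: "j - kpar r < kpar r" using sl \<sigma> False unfolding slot_def by auto
    show ?thesis
    proof (cases "star_partner (j - kpar r) s \<le> kpar r")
      case True
      then show ?thesis using False unfolding \<sigma> slot_cond_def by (auto simp: star_partner_def)
    next
      case False2: False
      have "(j - kpar r) div 2 < npar r" using a unfolding npar_def kpar_def by simp
      then show ?thesis using False False2 unfolding \<sigma> slot_cond_def by simp
    qed
  qed
qed

text \<open>In the special configuration the tangent schemes are the points (i, i div r) with
  direction x, the later general points of column j are (x, j) with x beyond all tangent points,
  star line a is the tangent to x^2 = yz at the parameter k + a, and general point p \<le> r lies on
  star line 2p. Integer parameters at least k keep all the relevant incidences apart.\<close>
definition star_param :: "nat \<Rightarrow> nat \<Rightarrow> complex" where "star_param r a = of_nat (kpar r + a)"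
definition conic_tangent :: "complex \<Rightarrow> nat \<Rightarrow> complex" where "conic_tangent t c = (if c = 0 then 2*t else if c = 1 then -1 else - (t*t))"
definition affine_pt :: "nat \<Rightarrow> nat \<Rightarrow> nat \<Rightarrow> complex" where "affine_pt x y c = (if c=0 then of_nat x else if c=1 then of_nat y else 1)"
definition dir_x :: "nat \<Rightarrow> complex" where "dir_x c = (if c = 0 then 1 else 0)"
definition star_gen_pt :: "complex \<Rightarrow> nat \<Rightarrow> complex" where "star_gen_pt t c = (if c=0 then -1 else if c=1 then -2*t - t*t else 1)"
definition gen_pt :: "nat \<Rightarrow> nat \<Rightarrow> nat \<Rightarrow> complex" where
  "gen_pt r p = (if p < r+1 then star_gen_pt (star_param r (2*p)) else affine_pt (mpar r + (p - (r+1))) (gen_column r (p - (r+1))))"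
definition special_params :: "nat \<Rightarrow> nat \<Rightarrow> complex" where
  "special_params r i = (if i < 3*mpar r then affine_pt (i div 3) ((i div 3) div r) (i mod 3)
   else if i < 6*mpar r then dir_x ((i - 3*mpar r) mod 3)
   else if i < 6*mpar r + 3*(kpar r+1) then conic_tangent (star_param r ((i - 6*mpar r) div 3)) ((i - 6*mpar r) mod 3)
   else gen_pt r ((i - (6*mpar r + 3*(kpar r+1))) div 3) ((i - (6*mpar r + 3*(kpar r+1))) mod 3))"

lemma div_mod_3: "c < 3 \<Longrightarrow> (3*i + c) div 3 = (i::nat)" "c < 3 \<Longrightarrow> (3*i + c) mod 3 = (c::nat)"
  by auto

lemma blk_special_tan: "i < mpar r \<Longrightarrow> c < 3 \<Longrightarrow> blk 0 i (special_params r) c = affine_pt i (i div r) c"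
  unfolding blk_def special_params_def using div_mod_3[of c i] by auto

lemma blk_special_dir: "i < mpar r \<Longrightarrow> c < 3 \<Longrightarrow> blk (3*mpar r) i (special_params r) c = dir_x c"
proof -
  assume i: "i < mpar r" and c: "c < 3"
  have e: "3 * mpar r + 3 * i + c - 3 * mpar r = 3*i + c" by simp
  show ?thesis unfolding blk_def special_params_def using i c div_mod_3[OF c, of i] by (auto simp: e)
qed

lemma blk_special_star: "a < kpar r + 1 \<Longrightarrow> c < 3 \<Longrightarrow> blk (6*mpar r) a (special_params r) c = conic_tangent (star_param r a) c"
proof -
  assume a: "a < kpar r + 1" and c: "c < 3"
  have e: "6 * mpar r + 3 * a + c - 6 * mpar r = 3*a + c" by simp
  show ?thesis unfolding blk_def special_params_def using a c div_mod_3[OF c, of a] by (auto simp: e)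
qed

lemma blk_special_gen: "c < 3 \<Longrightarrow> blk (6*mpar r + 3*(kpar r+1)) p (special_params r) c = gen_pt r p c"
proof -
  assume c: "c < 3"
  have e: "6 * mpar r + 3 * (kpar r + 1) + 3 * p + c - (6 * mpar r + 3 * (kpar r + 1)) = 3*p + c" by simp
  show ?thesis unfolding blk_def special_params_def using c div_mod_3[OF c, of p] by (auto simp: e)
qed

definition agree3 :: "(nat \<Rightarrow> complex) \<Rightarrow> (nat \<Rightarrow> complex) \<Rightarrow> bool" where
  "agree3 x y \<longleftrightarrow> x 0 = y 0 \<and> x 1 = y 1 \<and> x 2 = y 2"

lemma lin_form_agree3: "agree3 x y \<Longrightarrow> lin_form l x = lin_form l y"
  unfolding agree3_def lin_form_def by simp

lemma cross_agree3: "agree3 l l' \<Longrightarrow> agree3 m m' \<Longrightarrow> cross l m = cross l' m'"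
  unfolding agree3_def cross_def by (auto intro!: ext)

lemma agree3I: "(\<And>c. c < 3 \<Longrightarrow> x c = y c) \<Longrightarrow> agree3 x y"
  unfolding agree3_def by simp

definition column_x :: "nat \<Rightarrow> nat \<Rightarrow> nat \<Rightarrow> nat" where
  "column_x r j s = (if s < 2*tan_count r j then j*r + s div 2 else mpar r + gen_before r j + (s - 2*tan_count r j))"

definition slot_point :: "nat \<Rightarrow> nat \<times> nat \<Rightarrow> nat \<Rightarrow> complex" where
  "slot_point r \<sigma> = (let j = fst \<sigma>; s = snd \<sigma>; a = j - kpar r in
    if j < kpar r then affine_pt (column_x r j s) j
    else if star_partner a s \<le> kpar r then cross (conic_tangent (star_param r a)) (conic_tangent (star_param r (star_partner a s))) else star_gen_pt (star_param r a))"

definition deriv_slot :: "nat \<Rightarrow> nat \<times> nat \<Rightarrow> bool" where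
  "deriv_slot r \<sigma> \<longleftrightarrow> fst \<sigma> < kpar r \<and> snd \<sigma> < 2*tan_count r (fst \<sigma>) \<and> odd (snd \<sigma>)"

lemma gen_slot_column: assumes r: "r \<ge> 1" and sl: "slot r (j,s)" and j: "j < kpar r" and ns: "\<not> s < 2*tan_count r j"
  shows "s - 2*tan_count r j < gen_count r j" "gen_column r (gen_before r j + (s - 2*tan_count r j)) = j"
proof -
  have s: "s < 2*kpar r - j" using sl unfolding slot_def by auto
  show w: "s - 2*tan_count r j < gen_count r j" using s ns gen_count_plus_tan_count[OF j] by linarith
  show "gen_column r (gen_before r j + (s - 2*tan_count r j)) = j" using gen_column_eq[OF w] .
qed

lemma cond_point_special: assumes r: "r \<ge> 1" and sl: "slot r \<sigma>"
  shows "agree3 (cond_point r (special_params r) (slot_cond r \<sigma>)) (slot_point r \<sigma>)"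
proof -
  obtain j s where \<sigma>: "\<sigma> = (j,s)" by (cases \<sigma>)
  show ?thesis
  proof (cases "j < kpar r")
    case True
    show ?thesis
    proof (cases "s < 2*tan_count r j")
      case True2: True
      have i: "j*r + s div 2 < mpar r" using tan_index_bounds[OF True2] by simp
      show ?thesis using True True2 unfolding \<sigma> slot_cond_def slot_point_def column_x_def
        by (cases "even s") (auto intro!: agree3I simp: blk_special_tan[OF i] tan_index_div[OF True2])
    next
      case False
      have l: "gen_column r (gen_before r j + (s - 2*tan_count r j)) = j" using gen_slot_column[OF r sl[unfolded \<sigma>] True False] by simp
      define p where "p = r + 1 + (gen_before r j + (s - 2*tan_count r j))"
      have cd: "slot_cond r \<sigma> = GenPt p" using True False unfolding \<sigma> slot_cond_def p_def by (simp add: add.assoc)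
      have e1: "agree3 (cond_point r (special_params r) (GenPt p)) (gen_pt r p)" unfolding cond_point.simps by (intro agree3I blk_special_gen)
      have "gen_pt r p = affine_pt (mpar r + (gen_before r j + (s - 2*tan_count r j))) j" unfolding gen_pt_def p_def using l by simp
      moreover have "slot_point r \<sigma> = affine_pt (mpar r + (gen_before r j + (s - 2*tan_count r j))) j"
        using True False unfolding \<sigma> slot_point_def column_x_def by (simp add: add.assoc)
      ultimately show ?thesis using e1 cd by simp
    qed
  next
    case False
    have a: "j - kpar r < kpar r" using sl \<sigma> False unfolding slot_def by auto
    show ?thesis
    proof (cases "star_partner (j - kpar r) s \<le> kpar r")
      case True
      have "cross (blk (6 * mpar r) (j - kpar r) (special_params r)) (blk (6 * mpar r) (star_partner (j - kpar r) s) (special_params r))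
         = cross (conic_tangent (star_param r (j - kpar r))) (conic_tangent (star_param r (star_partner (j - kpar r) s)))"
        using a True by (intro cross_agree3 agree3I blk_special_star) auto
      then show ?thesis using False True unfolding \<sigma> slot_cond_def slot_point_def agree3_def Let_def by simp
    next
      case False2: False
      have ev: "even (j - kpar r)" using free_slot_even[OF sl[unfolded \<sigma>] False False2] by simp
      have lt: "(j - kpar r) div 2 < r + 1" using a unfolding kpar_def by simp
      have "2 * ((j - kpar r) div 2) = j - kpar r" using ev by simp
      then have pp: "gen_pt r ((j - kpar r) div 2) = star_gen_pt (star_param r (j - kpar r))" using lt unfolding gen_pt_def by simp
      have e1: "agree3 (cond_point r (special_params r) (GenPt ((j - kpar r) div 2))) (gen_pt r ((j - kpar r) div 2))" unfolding cond_point.simps by (intro agree3I blk_special_gen)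
      have cd: "slot_cond r \<sigma> = GenPt ((j - kpar r) div 2)" using False False2 unfolding \<sigma> slot_cond_def by simp
      have "slot_point r \<sigma> = star_gen_pt (star_param r (j - kpar r))" using False False2 unfolding \<sigma> slot_point_def by simp
      then show ?thesis using e1 cd pp by simp
    qed
  qed
qed

lemma slot_cond_TanDir_iff: "(\<exists>i. slot_cond r \<sigma> = TanDir i) \<longleftrightarrow> deriv_slot r \<sigma>"
  unfolding slot_cond_def deriv_slot_def Let_def by auto

lemma blk_special_dir_slot: assumes "slot_cond r \<sigma> = TanDir i" shows "agree3 (blk (3*mpar r) i (special_params r)) dir_x"
proof -
  have "deriv_slot r \<sigma>" using assms slot_cond_TanDir_iff by blast
  then have "fst \<sigma> < kpar r" "snd \<sigma> < 2*tan_count r (fst \<sigma>)" "i = fst \<sigma> * r + snd \<sigma> div 2"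
    using assms unfolding deriv_slot_def slot_cond_def Let_def by (auto split: if_splits)
  then have "i < mpar r" using tan_index_bounds by simp
  then show ?thesis by (intro agree3I blk_special_dir)
qed

definition hline :: "nat \<Rightarrow> nat \<Rightarrow> complex" where "hline j c = (if c = 0 then 0 else if c = 1 then 1 else - of_nat j)"
definition vline :: "nat \<Rightarrow> nat \<Rightarrow> complex" where "vline x c = (if c = 0 then 1 else if c = 1 then 0 else - of_nat x)"
definition line_inf :: "nat \<Rightarrow> complex" where "line_inf c = (if c = 2 then 1 else 0)"
definition column_line :: "nat \<Rightarrow> nat \<Rightarrow> nat \<Rightarrow> complex" where
  "column_line r j = (if j < kpar r then hline j else conic_tangent (star_param r (j - kpar r)))"
definition slot_line :: "nat \<Rightarrow> nat \<Rightarrow> nat \<Rightarrow> nat \<Rightarrow> complex" where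
  "slot_line r j s = (if j < kpar r then vline (column_x r j s) else if star_partner (j - kpar r) s \<le> kpar r then conic_tangent (star_param r (star_partner (j - kpar r) s)) else conic_tangent (star_param r (j - kpar r)))"

lemma lin_hline_affine: "lin_form (hline j) (affine_pt x y) = of_nat y - of_nat j" unfolding lin_form_def hline_def affine_pt_def by simp
lemma lin_vline_affine: "lin_form (vline x') (affine_pt x y) = of_nat x - of_nat x'" unfolding lin_form_def vline_def affine_pt_def by simp
lemma lin_line_inf_affine: "lin_form line_inf (affine_pt x y) = 1" unfolding lin_form_def line_inf_def affine_pt_def by simp
lemma lin_hline_dir: "lin_form (hline j) dir_x = 0" unfolding lin_form_def hline_def dir_x_def by simp
lemma lin_vline_dir: "lin_form (vline x) dir_x = 1" unfolding lin_form_def vline_def dir_x_def by simp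
lemma lin_tangent_cross: "lin_form (conic_tangent c) (cross (conic_tangent a) (conic_tangent b)) = -2*(b-a)*(c-a)*(c-b)"
  unfolding lin_form_def conic_tangent_def cross_def by (simp add: algebra_simps)
lemma lin_hline_cross: "lin_form (hline j) (cross (conic_tangent a) (conic_tangent b)) = 2*(b-a)*(a*b - of_nat j)"
  unfolding lin_form_def hline_def conic_tangent_def cross_def by (simp add: algebra_simps)
lemma lin_line_inf_cross: "lin_form line_inf (cross (conic_tangent a) (conic_tangent b)) = 2*(b-a)"
  unfolding lin_form_def line_inf_def conic_tangent_def cross_def by (simp add: algebra_simps)
lemma lin_tangent_star_gen: "lin_form (conic_tangent c) (star_gen_pt t) = (t - c)*(t + c + 2)"
  unfolding lin_form_def conic_tangent_def star_gen_pt_def by (simp add: algebra_simps)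
lemma lin_hline_star_gen: "lin_form (hline j) (star_gen_pt t) = -2*t - t*t - of_nat j"
  unfolding lin_form_def hline_def star_gen_pt_def by (simp add: algebra_simps)
lemma lin_line_inf_star_gen: "lin_form line_inf (star_gen_pt t) = 1"
  unfolding lin_form_def line_inf_def star_gen_pt_def by simp

lemma star_param_eq_iff: "star_param r a = star_param r b \<longleftrightarrow> a = b" unfolding star_param_def by simp
lemma star_param_diff_ne_0: "a \<noteq> b \<Longrightarrow> star_param r a - star_param r b \<noteq> 0" unfolding star_param_def by simp
lemma star_param_prod_ne: "j < kpar r \<Longrightarrow> star_param r a * star_param r b - of_nat j \<noteq> 0"
proof -
  assume j: "j < kpar r"
  have "j < (kpar r + a) * (kpar r + b)"
  proof -
    have "kpar r \<le> (kpar r + a) * (kpar r + b)" by (simp add: kpar_def trans_le_add1)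
    then show ?thesis using j by linarith
  qed
  then have "of_nat ((kpar r + a) * (kpar r + b)) \<noteq> (of_nat j :: complex)" by (metis less_irrefl of_nat_eq_iff)
  then show ?thesis unfolding star_param_def by simp
qed
lemma star_param_star_gen_ne_0: "-2 * star_param r a - star_param r a * star_param r a - of_nat j \<noteq> 0"
proof -
  have e: "-2 * star_param r a - star_param r a * star_param r a - of_nat j = - of_nat (2*(kpar r + a) + (kpar r + a)*(kpar r + a) + j)"
    unfolding star_param_def by simp
  have "(of_nat (2*(kpar r + a) + (kpar r + a)*(kpar r + a) + j) :: complex) \<noteq> 0"
    by (simp only: of_nat_eq_0_iff) (simp add: kpar_def)
  then show ?thesis unfolding e by (metis neg_equal_0_iff_equal)
qed
lemma star_param_sum_ne_0: "star_param r a + star_param r b + 2 \<noteq> 0"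
proof -
  have e: "star_param r a + star_param r b + 2 = of_nat (kpar r + a + (kpar r + b) + 2)" unfolding star_param_def by simp
  have "(of_nat (kpar r + a + (kpar r + b) + 2) :: complex) \<noteq> 0" by (simp only: of_nat_eq_0_iff)
  then show ?thesis unfolding e .
qed
lemma tangent_star_gen_ne_0: "a \<noteq> b \<Longrightarrow> lin_form (conic_tangent (star_param r b)) (star_gen_pt (star_param r a)) \<noteq> 0"
  unfolding lin_tangent_star_gen using star_param_diff_ne_0[of a b r] star_param_sum_ne_0[of r a b] by simp
lemma hline_cross_ne_0: "a \<noteq> b \<Longrightarrow> j < kpar r \<Longrightarrow> lin_form (hline j) (cross (conic_tangent (star_param r a)) (conic_tangent (star_param r b))) \<noteq> 0"
  unfolding lin_hline_cross using star_param_diff_ne_0[of b a r] star_param_prod_ne[of j r a b] by (simp only: mult_eq_0_iff) simp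
lemma hline_star_gen_ne_0: "lin_form (hline j) (star_gen_pt (star_param r a)) \<noteq> 0"
  unfolding lin_hline_star_gen by (rule star_param_star_gen_ne_0)
lemma tangent_cross_ne_0: "a \<noteq> b \<Longrightarrow> c \<noteq> a \<Longrightarrow> c \<noteq> b \<Longrightarrow> lin_form (conic_tangent (star_param r c)) (cross (conic_tangent (star_param r a)) (conic_tangent (star_param r b))) \<noteq> 0"
  unfolding lin_tangent_cross using star_param_diff_ne_0[of b a r] star_param_diff_ne_0[of c a r] star_param_diff_ne_0[of c b r] by simp

lemma column_x_eq: assumes j: "j < kpar r" and ss: "s' < s" and sl: "s < 2*kpar r - j"
  and eq: "column_x r j s' = column_x r j s"
  shows "s < 2*tan_count r j \<and> odd s \<and> s' = s - 1"
proof (cases "s < 2*tan_count r j")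
  case True
  then have "s' < 2 * tan_count r j" using ss by simp
  then have "s' div 2 = s div 2" using eq True unfolding column_x_def by simp
  then show ?thesis using True ss by presburger
next
  case False
  show ?thesis
  proof (cases "s' < 2*tan_count r j")
    case True
    then have "column_x r j s' < mpar r" unfolding column_x_def using tan_index_bounds[OF True] by simp
    moreover have "column_x r j s \<ge> mpar r" unfolding column_x_def using False by simp
    ultimately show ?thesis using eq by simp
  next
    case False2: False
    then show ?thesis using eq False ss unfolding column_x_def by simp
  qed
qed

lemma column_line_through_slot_point: assumes "slot r (j,s)" shows "lin_form (column_line r j) (slot_point r (j,s)) = 0"
proof (cases "j < kpar r")
  case True then show ?thesis unfolding column_line_def slot_point_def by (simp add: lin_hline_affine)
next
  case False
  then show ?thesis unfolding column_line_def slot_point_def by (simp add: Let_def lin_tangent_cross lin_tangent_star_gen)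
qed

lemma column_line_dir: "deriv_slot r (j,s) \<Longrightarrow> lin_form (column_line r j) dir_x = 0"
  unfolding deriv_slot_def column_line_def by (simp add: lin_hline_dir)

lemma slot_point_star: "star_partner a s \<le> kpar r \<Longrightarrow> slot_point r (kpar r + a, s) = cross (conic_tangent (star_param r a)) (conic_tangent (star_param r (star_partner a s)))"
  unfolding slot_point_def by simp
lemma slot_point_free: "\<not> star_partner a s \<le> kpar r \<Longrightarrow> slot_point r (kpar r + a, s) = star_gen_pt (star_param r a)"
  unfolding slot_point_def by simp
lemma column_line_hline: "j < kpar r \<Longrightarrow> column_line r j = hline j" unfolding column_line_def by simp
lemma column_line_tangent: "column_line r (kpar r + a) = conic_tangent (star_param r a)" unfolding column_line_def by simp
lemma slot_line_star: "star_partner a s \<le> kpar r \<Longrightarrow> slot_line r (kpar r + a) s = conic_tangent (star_param r (star_partner a s))" unfolding slot_line_def by simp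

lemma earlier_column_line_avoids: assumes r: "r \<ge> 1" and sl: "slot r (j,s)" and jj: "j' < j"
  shows "lin_form (column_line r j') (slot_point r (j,s)) \<noteq> 0"
proof (cases "j < kpar r")
  case True
  then show ?thesis using jj unfolding column_line_def slot_point_def by (simp add: lin_hline_affine)
next
  case False
  then obtain a where j: "j = kpar r + a" using le_Suc_ex not_less by blast
  have a: "a < kpar r" using sl unfolding slot_def j by auto
  have ab: "a \<noteq> star_partner a s" unfolding star_partner_def by simp
  show ?thesis
  proof (cases "j' < kpar r")
    case True
    show ?thesis
    proof (cases "star_partner a s \<le> kpar r")
      case True2: True
      show ?thesis unfolding j column_line_hline[OF True] slot_point_star[OF True2] by (rule hline_cross_ne_0[OF ab True])
    next
      case F2: False
      show ?thesis unfolding j column_line_hline[OF True] slot_point_free[OF F2] by (rule hline_star_gen_ne_0)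
    qed
  next
    case False2: False
    then obtain a' where j': "j' = kpar r + a'" using le_Suc_ex not_less by blast
    have aa: "a' < a" using jj unfolding j j' by simp
    show ?thesis
    proof (cases "star_partner a s \<le> kpar r")
      case True
      have "a < star_partner a s" unfolding star_partner_def by simp
      then show ?thesis unfolding j j' column_line_tangent slot_point_star[OF True] using aa
        by (intro tangent_cross_ne_0) auto
    next
      case F3: False
      show ?thesis unfolding j j' column_line_tangent slot_point_free[OF F3] using aa by (intro tangent_star_gen_ne_0) auto
    qed
  qed
qed

lemma earlier_slot_line_avoids: assumes r: "r \<ge> 1" and sl: "slot r (j,s)" and ss: "s' < s"
  and nd: "\<not> (deriv_slot r (j,s) \<and> s' = s - 1)"
  shows "lin_form (slot_line r j s') (slot_point r (j,s)) \<noteq> 0"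
proof (cases "j < kpar r")
  case True
  have s: "s < 2*kpar r - j" using sl unfolding slot_def by simp
  have "column_x r j s' \<noteq> column_x r j s" using column_x_eq[OF True ss s] nd True unfolding deriv_slot_def by auto
  then show ?thesis using True unfolding slot_line_def slot_point_def by (simp add: lin_vline_affine)
next
  case False
  then obtain a where j: "j = kpar r + a" using le_Suc_ex not_less by blast
  have a: "a < kpar r" and s: "s < kpar r - a" using sl unfolding slot_def j by auto
  have sb': "star_partner a s' \<le> kpar r" using s ss unfolding star_partner_def by auto
  have ab: "a < star_partner a s'" "star_partner a s' < star_partner a s" using ss unfolding star_partner_def by auto
  show ?thesis
  proof (cases "star_partner a s \<le> kpar r")
    case True
    have "a < star_partner a s" unfolding star_partner_def by simp
    then show ?thesis unfolding j slot_line_star[OF sb'] slot_point_star[OF True] using ab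
      by (intro tangent_cross_ne_0) auto
  next
    case F2: False
    show ?thesis unfolding j slot_line_star[OF sb'] slot_point_free[OF F2] using ab
      by (intro tangent_star_gen_ne_0) auto
  qed
qed

lemma slot_line_through_slot_point: "lin_form (slot_line r j s) (slot_point r (j,s)) = 0"
  unfolding slot_line_def slot_point_def by (simp add: Let_def lin_vline_affine lin_tangent_cross lin_tangent_star_gen)

lemma deriv_slot_line: assumes "deriv_slot r (j,s)" shows "slot_line r j (s-1) = slot_line r j s" "lin_form (slot_line r j (s-1)) dir_x \<noteq> 0"
proof -
  have j: "j < kpar r" and s: "s < 2*tan_count r j" "odd s" using assms unfolding deriv_slot_def by auto
  have "(s - 1) div 2 = s div 2" using s(2) by (metis odd_two_times_div_two_nat div_mult_self1_is_m zero_less_numeral) 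
  moreover have "s - 1 < 2*tan_count r j" using s by simp
  ultimately have "column_x r j (s-1) = column_x r j s" using s unfolding column_x_def by simp
  then show "slot_line r j (s-1) = slot_line r j s" using j unfolding slot_line_def by simp
  show "lin_form (slot_line r j (s-1)) dir_x \<noteq> 0" using j unfolding slot_line_def by (simp add: lin_vline_dir)
qed

lemma line_inf_avoids: assumes "slot r (j,s)" shows "lin_form line_inf (slot_point r (j,s)) \<noteq> 0"
  unfolding slot_point_def by (auto simp: Let_def lin_line_inf_affine lin_line_inf_cross lin_line_inf_star_gen star_param_eq_iff star_partner_def)

definition slot_factors :: "nat \<Rightarrow> nat \<times> nat \<Rightarrow> (nat \<Rightarrow> complex) list" where
  "slot_factors r \<sigma> = map (column_line r) [0..<fst \<sigma>] @ map (slot_line r (fst \<sigma>)) [0..<snd \<sigma>] @ replicate (dpar r - fst \<sigma> - snd \<sigma>) line_inf"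

lemma kpar_dpar: "2 * kpar r = Suc (dpar r)" unfolding kpar_def dpar_def by simp

lemma length_slot_factors: "slot r \<sigma> \<Longrightarrow> length (slot_factors r \<sigma>) = dpar r"
  unfolding slot_factors_def slot_def kpar_dpar by auto

definition pairing :: "nat \<Rightarrow> nat \<times> nat \<Rightarrow> nat \<times> nat \<Rightarrow> complex" where
  "pairing r \<sigma>' \<sigma> = (if deriv_slot r \<sigma>' then prod_deriv (slot_factors r \<sigma>) (slot_point r \<sigma>') dir_x else (\<Prod>l\<leftarrow>slot_factors r \<sigma>. lin_form l (slot_point r \<sigma>')))"

lemma prod_deriv_agree3: "agree3 x x' \<Longrightarrow> agree3 v v' \<Longrightarrow> prod_deriv ls x v = prod_deriv ls x' v'"
proof (induction ls)
  case Nil then show ?case by simp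
next
  case (Cons l ls)
  have "(\<Prod>l'\<leftarrow>ls. lin_form l' x) = (\<Prod>l'\<leftarrow>ls. lin_form l' x')" using lin_form_agree3[OF Cons.prems(1)] by simp
  then show ?case using Cons lin_form_agree3 by simp
qed

lemma cond_value_special: assumes r: "r \<ge> 1" and s1: "slot r \<sigma>'" and s2: "slot r \<sigma>"
  shows "cond_value r (special_params r) (slot_cond r \<sigma>') (prod_coeffs (slot_factors r \<sigma>)) = pairing r \<sigma>' \<sigma>"
proof (cases "deriv_slot r \<sigma>'")
  case True
  then obtain i where c: "slot_cond r \<sigma>' = TanDir i" using slot_cond_TanDir_iff by blast
  have e1: "agree3 (blk 0 i (special_params r)) (slot_point r \<sigma>')" using cond_point_special[OF r s1] c by simp
  have e2: "agree3 (blk (3*mpar r) i (special_params r)) dir_x" using blk_special_dir_slot[OF c] .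
  show ?thesis unfolding c cond_value_TanDir pairing_def using True length_slot_factors[OF s2]
    form_deriv_prod_coeffs[of "slot_factors r \<sigma>"] prod_deriv_agree3[OF e1 e2] by simp
next
  case False
  then have c: "\<forall>i. slot_cond r \<sigma>' \<noteq> TanDir i" using slot_cond_TanDir_iff by blast
  have e1: "agree3 (cond_point r (special_params r) (slot_cond r \<sigma>')) (slot_point r \<sigma>')" using cond_point_special[OF r s1] .
  have "(\<Prod>l\<leftarrow>slot_factors r \<sigma>. lin_form l (cond_point r (special_params r) (slot_cond r \<sigma>'))) = (\<Prod>l\<leftarrow>slot_factors r \<sigma>. lin_form l (slot_point r \<sigma>'))"
    using lin_form_agree3[OF e1] by simp
  then show ?thesis unfolding cond_value_eval[OF c] pairing_def using False length_slot_factors[OF s2]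
    form_eval_prod_coeffs[of "slot_factors r \<sigma>"] by simp
qed

lemma two_le_length_filter: assumes "a < b" "b < s" "P a" "P b"
  shows "2 \<le> length (filter P [0..<s])"
proof -
  have "{a,b} \<subseteq> set (filter P [0..<s])" using assms by auto
  then have "card {a,b} \<le> card (set (filter P [0..<s]))" by (intro card_mono) auto
  also have "\<dots> = length (filter P [0..<s])" by (intro distinct_card) simp
  finally show ?thesis using assms by simp
qed

lemma pairing_eq_0_lex: assumes r: "r \<ge> 1" and s1: "slot r \<sigma>'" and s2: "slot r \<sigma>" and lx: "lex_less \<sigma>' \<sigma>"
  shows "pairing r \<sigma>' \<sigma> = 0"
proof -
  obtain j' s' where \<sigma>': "\<sigma>' = (j',s')" by (cases \<sigma>')
  obtain j s where \<sigma>: "\<sigma> = (j,s)" by (cases \<sigma>)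
  consider "j' < j" | "j' = j" "s' < s" using lx unfolding lex_less_def \<sigma> \<sigma>' by auto
  then show ?thesis
  proof cases
    case 1
    have mem: "column_line r j' \<in> set (slot_factors r \<sigma>)" using 1 unfolding slot_factors_def \<sigma> by auto
    have z: "lin_form (column_line r j') (slot_point r \<sigma>') = 0" using column_line_through_slot_point[OF s1[unfolded \<sigma>']] \<sigma>' by simp
    show ?thesis
    proof (cases "deriv_slot r \<sigma>'")
      case True
      have "lin_form (column_line r j') dir_x = 0" using column_line_dir True \<sigma>' by simp
      then show ?thesis unfolding pairing_def using True prod_deriv_eq_0_tangent_factor[OF mem z] by simp
    next
      case False
      then show ?thesis unfolding pairing_def using prod_lin_form_eq_0[OF mem z] by simp
    qed
  next
    case 2
    have mem: "slot_line r j s' \<in> set (slot_factors r \<sigma>)" using 2 unfolding slot_factors_def \<sigma> by auto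
    have z: "lin_form (slot_line r j s') (slot_point r \<sigma>') = 0" using slot_line_through_slot_point \<sigma>' 2 by simp
    show ?thesis
    proof (cases "deriv_slot r \<sigma>'")
      case True
      have D: "deriv_slot r (j,s')" using True \<sigma>' 2 by simp
      then have s1': "s' \<ge> 1" unfolding deriv_slot_def by (cases s') auto
      have z2: "lin_form (slot_line r j (s'-1)) (slot_point r \<sigma>') = 0" using z deriv_slot_line(1)[OF D] by simp
      let ?P = "\<lambda>l. lin_form l (slot_point r \<sigma>') = 0"
      have "2 \<le> length (filter (?P \<circ> slot_line r j) [0..<s])"
        by (rule two_le_length_filter[of "s'-1" s']) (use s1' 2 z z2 in auto)
      also have "\<dots> = length (filter ?P (map (slot_line r j) [0..<s]))" by (simp add: filter_map)
      also have "\<dots> \<le> length (filter ?P (slot_factors r \<sigma>))" unfolding slot_factors_def \<sigma> by simp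
      finally show ?thesis unfolding pairing_def using True prod_deriv_eq_0_double_zero by simp
    next
      case False
      then show ?thesis unfolding pairing_def using prod_lin_form_eq_0[OF mem z] by simp
    qed
  qed
qed

lemma pairing_diag_ne_0: assumes r: "r \<ge> 1" and sl: "slot r \<sigma>" shows "pairing r \<sigma> \<sigma> \<noteq> 0"
proof -
  obtain j s where \<sigma>: "\<sigma> = (j,s)" by (cases \<sigma>)
  have sl': "slot r (j,s)" using sl \<sigma> by simp
  show ?thesis
  proof (cases "deriv_slot r \<sigma>")
    case False
    have "\<forall>l\<in>set (slot_factors r \<sigma>). lin_form l (slot_point r \<sigma>) \<noteq> 0"
      using earlier_column_line_avoids[OF r sl'] earlier_slot_line_avoids[OF r sl'] line_inf_avoids[OF sl'] False unfolding slot_factors_def \<sigma> by auto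
    then show ?thesis unfolding pairing_def using False by (auto simp: prod_list_zero_iff)
  next
    case True
    have D: "deriv_slot r (j,s)" using True \<sigma> by simp
    then have s1: "s \<ge> 1" unfolding deriv_slot_def by (cases s) auto
    define as where "as = map (column_line r) [0..<j] @ map (slot_line r j) [0..<s-1]"
    define bs where "bs = replicate (dpar r - j - s) line_inf"
    have f: "slot_factors r \<sigma> = as @ slot_line r j (s-1) # bs" unfolding slot_factors_def as_def bs_def \<sigma> using s1 by (cases s) simp_all
    have nz: "\<forall>l\<in>set as \<union> set bs. lin_form l (slot_point r \<sigma>) \<noteq> 0"
      using earlier_column_line_avoids[OF r sl'] earlier_slot_line_avoids[OF r sl'] line_inf_avoids[OF sl'] unfolding as_def bs_def \<sigma> by auto
    have g0: "lin_form (slot_line r j (s-1)) (slot_point r \<sigma>) = 0" using slot_line_through_slot_point deriv_slot_line(1)[OF D] \<sigma> by simp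
    have "prod_deriv (slot_factors r \<sigma>) (slot_point r \<sigma>) dir_x = lin_form (slot_line r j (s-1)) dir_x * (\<Prod>l\<leftarrow>as @ bs. lin_form l (slot_point r \<sigma>))"
      unfolding f by (rule prod_deriv_simple_zero[OF nz g0])
    moreover have "(\<Prod>l\<leftarrow>as @ bs. lin_form l (slot_point r \<sigma>)) \<noteq> 0" using nz by (auto simp: prod_list_zero_iff)
    ultimately show ?thesis unfolding pairing_def using True deriv_slot_line(2)[OF D] by simp
  qed
qed

definition slots :: "nat \<Rightarrow> (nat \<times> nat) list" where "slots r = tri_grid (Suc (dpar r))"

lemma slots_nth_slot: "i < length (slots r) \<Longrightarrow> slot r (slots r ! i)"
  unfolding slots_def slot_def kpar_dpar using tri_grid_nth_bounds by blast

definition cond_matrix :: "nat \<Rightarrow> (nat \<Rightarrow> complex) \<Rightarrow> complex mat" where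
  "cond_matrix r z = mat (length (slots r)) (length (slots r)) (\<lambda>(i,c). cond_coeff r z (slot_cond r (slots r ! i)) (monom_list (dpar r) ! c))"

lemma det_cond_matrix_special: assumes r: "r \<ge> 1" shows "det (cond_matrix r (special_params r)) \<noteq> 0"
proof -
  let ?phi = "\<lambda>i. prod_coeffs (slot_factors r (slots r ! i))"
  let ?w = "\<lambda>i. cond_coeff r (special_params r) (slot_cond r (slots r ! i))"
  have pairing: "(\<Sum>t\<in>monoms (dpar r). ?phi i' t * ?w i t) = pairing r (slots r ! i) (slots r ! i')"
    if "i < length (slots r)" "i' < length (slots r)" for i i'
    using cond_value_special[OF r slots_nth_slot slots_nth_slot] that unfolding cond_value_def by simp
  show ?thesis
    unfolding cond_matrix_def
  proof (rule det_ne_0_if_dual_triangular[where phi = ?phi])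
    show "distinct (monom_list (dpar r))" "set (monom_list (dpar r)) = monoms (dpar r)"
      "length (monom_list (dpar r)) = length (slots r)"
      using monom_list_enumerates unfolding slots_def by auto
    show "(\<Sum>t\<in>monoms (dpar r). ?phi i' t * ?w i t) = 0" if "i < i'" "i' < length (slots r)" for i i'
      using pairing pairing_eq_0_lex[OF r slots_nth_slot slots_nth_slot] that tri_grid_nth_lex_less
      unfolding slots_def by auto
    show "(\<Sum>t\<in>monoms (dpar r). ?phi i t * ?w i t) \<noteq> 0" if "i < length (slots r)" for i
      using pairing pairing_diag_ne_0[OF r slots_nth_slot] that by simp
  qed
qed

lemma generic_no_form: assumes r: "r \<ge> 1"
  shows "generic (Npar r) (\<lambda>z. \<forall>F. vanishes_on_V r z F \<longrightarrow> (\<forall>t\<in>monoms (dpar r). F t = 0))"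
proof (rule generic_mono)
  let ?w = "\<lambda>z i. cond_coeff r z (slot_cond r (slots r ! i))"
  show "generic (Npar r) (\<lambda>z. \<forall>F. (\<forall>i<length (slots r). (\<Sum>t\<in>monoms (dpar r). F t * ?w z i t) = 0)
          \<longrightarrow> (\<forall>t\<in>monoms (dpar r). F t = 0))"
  proof (rule generic_trivial_solution)
    show "distinct (monom_list (dpar r))" "set (monom_list (dpar r)) = monoms (dpar r)"
      "length (monom_list (dpar r)) = length (slots r)"
      using monom_list_enumerates unfolding slots_def by auto
    show "poly_fun (Npar r) (\<lambda>z. ?w z i t)" if "i < length (slots r)" for i t
      using that by (simp add: poly_fun_cond_coeff cond_valid_slot_cond[OF r slots_nth_slot])
    show "det (mat (length (slots r)) (length (slots r)) (\<lambda>(i, c). ?w (special_params r) i (monom_list (dpar r) ! c))) \<noteq> 0"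
      using det_cond_matrix_special[OF r] unfolding cond_matrix_def .
  qed
  show "\<forall>F. (\<forall>i<length (slots r). (\<Sum>t\<in>monoms (dpar r). F t * ?w z i t) = 0) \<longrightarrow> (\<forall>t\<in>monoms (dpar r). F t = 0)
    \<Longrightarrow> \<forall>F. vanishes_on_V r z F \<longrightarrow> (\<forall>t\<in>monoms (dpar r). F t = 0)" for z
    using cond_value_eq_0[OF _ cond_valid_slot_cond[OF r slots_nth_slot]] unfolding cond_value_def by blast
qed

theorem mainTheorem4:
  fixes k :: nat
  assumes "k \<ge> 3" and "odd k"
  shows "let d = 2 * k - 1;
             m = k * (k - 1) div 2 - 2;
             n = (k^2 + 4 * k + 9) div 2;
             N = 6 * m + 3 * (k + 1) + 3 * n
         in generic N (\<lambda>z. \<forall>F.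
              ((\<forall>i<m. form_eval d F (blk 0 i z) = 0
                     \<and> form_deriv d F (blk 0 i z) (blk (3 * m) i z) = 0)
             \<and> (\<forall>i j. i < j \<and> j < k + 1 \<and> \<not> (even i \<and> j = i + 1) \<longrightarrow>
                     form_eval d F (cross (blk (6 * m) i z) (blk (6 * m) j z)) = 0)
             \<and> (\<forall>i<n. form_eval d F (blk (6 * m + 3 * (k + 1)) i z) = 0))
             \<longrightarrow> (\<forall>t\<in>monoms d. F t = 0))"
proof -
  obtain r where k: "k = 2*r+1" using assms(2) oddE by blast
  have r: "r \<ge> 1" using assms(1) k by simp
  have kk: "k = kpar r" unfolding kpar_def k ..
  have d: "2 * k - 1 = dpar r" unfolding dpar_def k by simp
  have m: "k * (k - 1) div 2 - 2 = mpar r" unfolding mpar_def k by (simp add: algebra_simps)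
  have n: "(k^2 + 4 * k + 9) div 2 = npar r"
  proof -
    have "k^2 + 4 * k + 9 = 2 * (2*r^2+6*r+7)" unfolding k by (simp add: power2_eq_square algebra_simps)
    then show ?thesis unfolding npar_def by simp
  qed
  have N: "6 * mpar r + 3 * (kpar r + 1) + 3 * npar r = Npar r" unfolding Npar_def ..
  show ?thesis
    unfolding Let_def d m n
    using generic_no_form[OF r] unfolding vanishes_on_V_def kk N .
qed

end
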